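(* Let $\mathcal{F}$ be a finite family of convex bodies in $\mathbb{R}^d$, let $p\in\mathbb{R}^d$ and let $k$ be a natural number with $k\le d+1$ and $k\le|\mathcal{F}|$. Assume that every point of $\mathbb{R}^d$ is at positive distance from at least one element of $\mathcal{F}$. Let $\mathcal{F}^*\subseteq\mathcal{F}$ be a subfamily of size $k$ such that the distance from $p$ to $\bigcap_{K\in\mathcal{F}^*}K$ is maximal among all subfamilies of $\mathcal{F}$ of size $k$. If $\bigcap_{K\in\mathcal{F}^*}K\neq\emptyset$, then the point $q$ of $\bigcap_{K\in\mathcal{F}^*}K$ closest to $p$ lies in $\bigcap_{K\in\mathcal{F}^*}\partial K$.
   Context: A convex body is a compact convex set with nonempty interior; $\partial K$ denotes the boundary of $K$; distances are Euclidean, with the distance to the empty set taken to be $\infty$. *)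

theory Defs
  imports "HOL-Analysis.Analysis" "HOL-Library.Extended_Real"
begin

definition convex_body :: "'a::euclidean_space set \<Rightarrow> bool" where
  "convex_body K \<longleftrightarrow> compact K \<and> convex K \<and> interior K \<noteq> {}"

definition setdist_pt :: "'a::euclidean_space \<Rightarrow> 'a set \<Rightarrow> ereal" where
  "setdist_pt p S = (if S = {} then \<infinity> else ereal (infdist p S))"

end

theory Submission
  imports Defs
begin

text \<open>
  Let \<open>q\<close> be the point of \<open>C = \<Inter>\<F>\<^sup>*\<close> closest to \<open>p\<close> and suppose \<open>q\<close> lies in the
  interior of some \<open>K\<^sub>0 \<in> \<F>\<^sup>*\<close>. Then \<open>q\<close> is a local, hence by convexity a global,
  minimiser of the distance to \<open>p\<close> on \<open>C' = \<Inter>(\<F>\<^sup>* - {K\<^sub>0})\<close>. Exchanging \<open>K\<^sub>0\<close> for any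
  \<open>K \<in> \<F>\<close> gives a \<open>k\<close>-subfamily with intersection \<open>C' \<inter> K\<close>; by maximality of \<open>\<F>\<^sup>*\<close> it is
  no farther from \<open>p\<close> than \<open>C'\<close>, so by uniqueness of closest points on \<open>C'\<close> it contains
  \<open>q\<close>. Thus \<open>q\<close> lies in every member of \<open>\<F>\<close>, which the covering hypothesis forbids.
\<close>

lemma convex_on_local_min_imp_global_min:
  fixes f :: "'a::real_normed_vector \<Rightarrow> real"
  assumes f: "convex_on C f" and x: "x \<in> C" and U: "open U" "x \<in> U"
    and local_min: "\<forall>z\<in>C \<inter> U. f x \<le> f z"
  shows "\<forall>y\<in>C. f x \<le> f y"
proof (rule ccontr)
  assume "\<not> ?thesis"
  then obtain y where y: "y \<in> C" "f y < f x" by auto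
  then have "0 < dist x y" by auto
  obtain e where e: "e > 0" "ball x e \<subseteq> U" using U open_contains_ball by blast
  obtain u where u: "0 < u" "u \<le> 1" "u < e / dist x y"
    using field_lbound_gt_zero[of 1 "e / dist x y"] \<open>0 < dist x y\<close> e(1) by auto
  define z where "z = (1 - u) *\<^sub>R x + u *\<^sub>R y"
  have "dist x z = u * dist x y"
    by (simp add: z_def dist_norm algebra_simps flip: scaleR_diff_right) (use u in simp)
  also have "\<dots> < e" using u \<open>0 < dist x y\<close> by (simp add: pos_less_divide_eq mult.commute)
  finally have "z \<in> C \<inter> U"
    using e convexD_alt[OF convex_on_imp_convex[OF f] x y(1)] u unfolding z_def by auto
  then have "f x \<le> f z" using local_min by blast
  also have "f z \<le> (1 - u) * f x + u * f y"
    using convex_onD[OF f, of u x y] u x y(1) unfolding z_def by auto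
  also have "\<dots> < f x"
    using mult_strict_left_mono[OF y(2) u(1)] by (simp add: algebra_simps)
  finally show False by simp
qed

lemma closest_point_Int_eq_if_in_interior:
  fixes p :: "'a::euclidean_space"
  assumes C: "convex C" "closed C" and K: "closed K" and "C \<inter> K \<noteq> {}"
    and q: "closest_point (C \<inter> K) p \<in> interior K"
  shows "closest_point (C \<inter> K) p = closest_point C p"
proof (rule closest_point_unique[OF C])
  let ?q = "closest_point (C \<inter> K) p"
  show q_in_C: "?q \<in> C"
    using closest_point_in_set[OF closed_Int[OF C(2) K] \<open>C \<inter> K \<noteq> {}\<close>] by blast
  have "\<forall>z\<in>C \<inter> interior K. dist p ?q \<le> dist p z"
    using closest_point_le[OF closed_Int[OF C(2) K]] interior_subset by blast
  then show "\<forall>z\<in>C. dist p ?q \<le> dist p z"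
    using convex_on_local_min_imp_global_min[OF convex_on_dist[OF C(1)] q_in_C open_interior q]
    by blast
qed

lemma setdist_pt_closest_point:
  fixes p :: "'a::euclidean_space"
  assumes "closed S" "S \<noteq> {}"
  shows "setdist_pt p S = ereal (dist p (closest_point S p))"
  using assms by (simp add: setdist_pt_def infdist_eq_setdist setdist_closest_point)

lemma setdist_pt_mem: "x \<in> S \<Longrightarrow> setdist_pt x S = 0"
  by (auto simp: setdist_pt_def zero_ereal_def)

lemma closest_point_mem_if_setdist_pt_Int_le:
  fixes p :: "'a::euclidean_space"
  assumes C: "convex C" "closed C" "C \<noteq> {}" and K: "closed K"
    and le: "setdist_pt p (C \<inter> K) \<le> setdist_pt p C"
  shows "closest_point C p \<in> K"
proof -
  have "C \<inter> K \<noteq> {}" using le C unfolding setdist_pt_def by auto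
  define z where "z = closest_point (C \<inter> K) p"
  have z: "z \<in> C \<inter> K" unfolding z_def
    using closest_point_in_set \<open>C \<inter> K \<noteq> {}\<close> C(2) K by blast
  have "ereal (dist p z) \<le> ereal (dist p (closest_point C p))"
    using le setdist_pt_closest_point[OF closed_Int[OF C(2) K] \<open>C \<inter> K \<noteq> {}\<close>]
      setdist_pt_closest_point[OF C(2,3)] unfolding z_def by metis
  then have "dist p z \<le> dist p (closest_point C p)" by simp
  then have "\<forall>y\<in>C. dist p z \<le> dist p y"
    using closest_point_le[OF C(2)] order_trans by blast
  then have "z = closest_point C p" using closest_point_unique[OF C(1,2)] z by blast
  then show ?thesis using z by auto
qed

lemma closest_point_Int_mem_of_exchange:
  fixes p :: "'a::euclidean_space"
  assumes C: "convex C" "closed C" and K\<^sub>0: "closed K\<^sub>0" "C \<inter> K\<^sub>0 \<noteq> {}" and K: "closed K"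
    and interior: "closest_point (C \<inter> K\<^sub>0) p \<in> interior K\<^sub>0"
    and not_closer: "setdist_pt p (C \<inter> K) \<le> setdist_pt p (C \<inter> K\<^sub>0)"
  shows "closest_point (C \<inter> K\<^sub>0) p \<in> K"
proof -
  have eq: "closest_point (C \<inter> K\<^sub>0) p = closest_point C p"
    by (rule closest_point_Int_eq_if_in_interior[OF C K\<^sub>0 interior])
  have "C \<noteq> {}" using K\<^sub>0(2) by blast
  have "setdist_pt p (C \<inter> K\<^sub>0) = setdist_pt p C"
    using setdist_pt_closest_point[OF closed_Int[OF C(2) K\<^sub>0(1)] K\<^sub>0(2)]
      setdist_pt_closest_point[OF C(2) \<open>C \<noteq> {}\<close>] eq by simp
  then show ?thesis
    unfolding eq using closest_point_mem_if_setdist_pt_Int_le[OF C \<open>C \<noteq> {}\<close> K] not_closer by simp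
qed

lemma card_exchange:
  assumes "finite A" "a \<in> A" "b \<notin> A - {a}"
  shows "card (insert b (A - {a})) = card A"
proof -
  have "card A > 0" using assms(1,2) card_gt_0_iff by blast
  then show ?thesis using assms by simp
qed

theorem proposition13p1:
  fixes \<F> :: "'a::euclidean_space set set" and p :: 'a and k :: nat and \<F>s :: "'a set set"
  assumes "finite \<F>"
    and "\<forall>K\<in>\<F>. convex_body K"
    and "k \<le> DIM('a) + 1" and "k \<le> card \<F>"
    and "\<forall>x::'a. \<exists>K\<in>\<F>. setdist_pt x K > 0"
    and "\<F>s \<subseteq> \<F>" and "card \<F>s = k"
    and "\<forall>\<G>. \<G> \<subseteq> \<F> \<and> card \<G> = k \<longrightarrow> setdist_pt p (\<Inter>\<G>) \<le> setdist_pt p (\<Inter>\<F>s)"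
    and "\<Inter>\<F>s \<noteq> {}"
  shows "closest_point (\<Inter>\<F>s) p \<in> (\<Inter>K\<in>\<F>s. frontier K)"
proof (rule ccontr)
  assume "\<not> ?thesis"
  then obtain K\<^sub>0 where K\<^sub>0: "K\<^sub>0 \<in> \<F>s" "closest_point (\<Inter>\<F>s) p \<notin> frontier K\<^sub>0" by blast
  have closed: "closed K" and convex: "convex K" if "K \<in> \<F>" for K
    using assms(2) that by (auto simp: convex_body_def compact_imp_closed)
  have "K\<^sub>0 \<in> \<F>" "closed (\<Inter>\<F>s)" using K\<^sub>0(1) assms(6) closed by auto
  define C' where "C' = \<Inter>(\<F>s - {K\<^sub>0})"
  have "closed C'" "convex C'"
    using closed convex assms(6) unfolding C'_def by (auto intro!: convex_Inter)
  have C'_Int: "\<Inter>\<F>s = C' \<inter> K\<^sub>0" using K\<^sub>0(1) unfolding C'_def by auto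
  define q where "q = closest_point (\<Inter>\<F>s) p"
  have "q \<in> \<Inter>\<F>s" unfolding q_def by (rule closest_point_in_set[OF \<open>closed (\<Inter>\<F>s)\<close> assms(9)])
  then have "q \<in> interior K\<^sub>0"
    using K\<^sub>0 closed[OF \<open>K\<^sub>0 \<in> \<F>\<close>] unfolding q_def frontier_def by auto
  have q_in_all: "q \<in> K" if K: "K \<in> \<F>" for K
  proof (cases "K \<in> \<F>s - {K\<^sub>0}")
    case True
    then show ?thesis using \<open>q \<in> \<Inter>\<F>s\<close> by blast
  next
    case False
    let ?\<G> = "insert K (\<F>s - {K\<^sub>0})"
    have "finite \<F>s" using assms(6,1) by (rule finite_subset)
    then have "card ?\<G> = k" using card_exchange[OF _ K\<^sub>0(1) False] assms(7) by simp
    moreover have "?\<G> \<subseteq> \<F>" using K assms(6) by blast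
    ultimately have "setdist_pt p (\<Inter>?\<G>) \<le> setdist_pt p (\<Inter>\<F>s)" using assms(8) by blast
    moreover have "\<Inter>?\<G> = C' \<inter> K" unfolding C'_def by blast
    ultimately show ?thesis
      using closest_point_Int_mem_of_exchange[OF \<open>convex C'\<close> \<open>closed C'\<close> closed[OF \<open>K\<^sub>0 \<in> \<F>\<close>]
          _ closed[OF K]] \<open>q \<in> interior K\<^sub>0\<close> assms(9)
      unfolding q_def C'_Int by simp
  qed
  obtain K where "K \<in> \<F>" "setdist_pt q K > 0" using assms(5) by blast
  then show False using setdist_pt_mem[OF q_in_all] by simp
qed

end
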